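(* Let $P$ be an NL poset on $X_n$. For any NL poset $P'$ on $X_{n+1}$ whose restriction to $X_n$ is $P$, there is a unique order ideal $S$ of $P$ such that $\mathrm{Grow}_S(\mathcal I(P))=\mathcal I(P')$.
   Context: Let $X_n=\{0,1,\ldots,n-1\}$. A naturally labeled (NL) poset on $X_n$ is a partial order $\preceq$ on $X_n$ such that $x\preceq y$ implies $x\le y$ in the usual integer order. $\mathcal I(P)$ denotes the set of order ideals (downward closed subsets) of $P$. For a family $T$ of subsets of $X_n$ (closed under union and intersection, containing $\emptyset$ and $X_n$) and $S\in T$, $\mathrm{Grow}_S(T)=T\cup\{U\cup\{n\}: U\in T,\ S\subseteq U\}$, a family of subsets of $X_{n+1}$. *)

theory Defs
  imports Main
begin

abbreviation X :: "nat \<Rightarrow> nat set" where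
  "X n \<equiv> {..<n}"

definition NL_poset :: "nat \<Rightarrow> nat rel \<Rightarrow> bool" where
  "NL_poset n P \<longleftrightarrow> P \<subseteq> X n \<times> X n \<and> refl_on (X n) P \<and> antisym P \<and> trans P
     \<and> (\<forall>x y. (x, y) \<in> P \<longrightarrow> x \<le> y)"

definition restrict_rel :: "nat rel \<Rightarrow> nat set \<Rightarrow> nat rel" where
  "restrict_rel P A = P \<inter> (A \<times> A)"

definition ideals :: "nat \<Rightarrow> nat rel \<Rightarrow> nat set set" where
  "ideals n P = {S. S \<subseteq> X n \<and> (\<forall>x y. (x, y) \<in> P \<longrightarrow> y \<in> S \<longrightarrow> x \<in> S)}"

definition Grow :: "nat \<Rightarrow> nat set \<Rightarrow> nat set set \<Rightarrow> nat set set" where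
  "Grow n S T = T \<union> {U \<union> {n} | U. U \<in> T \<and> S \<subseteq> U}"

end

theory Submission
  imports Defs
begin

text \<open>
  Since n is maximal in the natural labeling, an ideal of P' either avoids n, and is then an ideal
  of P, or contains n, and is then U \<union> {n} for an ideal U of P containing every element strictly
  below n. So S must be the strict down-set of n in P'. It is the only choice because
  S \<union> {n} is the least member of Grow_S(T) containing n.
\<close>

definition strict_downset :: "'a rel \<Rightarrow> 'a \<Rightarrow> 'a set" where
  "strict_downset R a = {x. (x, a) \<in> R \<and> x \<noteq> a}"

lemma Grow_subset_imp_subset:
  assumes "\<forall>U\<in>T. n \<notin> U" and "S \<in> T" and "Grow n S T \<subseteq> Grow n S' T"
  shows "S' \<subseteq> S"
proof -
  have "S \<union> {n} \<in> Grow n S' T"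
    using assms(2,3) unfolding Grow_def by blast
  then obtain U where "U \<in> T" "S' \<subseteq> U" "S \<union> {n} = U \<union> {n}"
    using assms(1,2) unfolding Grow_def by auto
  moreover from this have "U = S"
    using assms(1,2) by blast
  ultimately show ?thesis by simp
qed

lemma Grow_inj:
  assumes "\<forall>U\<in>T. n \<notin> U" and "S \<in> T" and "S' \<in> T" and "Grow n S T = Grow n S' T"
  shows "S = S'"
  using Grow_subset_imp_subset[of T n S S'] Grow_subset_imp_subset[of T n S' S] assms by blast

lemma ideals_avoid_bound: "U \<in> ideals n P \<Longrightarrow> n \<notin> U"
  unfolding ideals_def by auto

context
  fixes n :: nat and P P' :: "nat rel"
  assumes natural: "\<And>x y. (x, y) \<in> P' \<Longrightarrow> x \<le> y"
    and restrict: "restrict_rel P' (X n) = P"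
begin

lemma restrict_mem_iff: "(x, y) \<in> P \<longleftrightarrow> (x, y) \<in> P' \<and> y < n"
  using restrict natural unfolding restrict_rel_def by fastforce

lemma ideals_restrict_eq: "ideals n P = {U \<in> ideals (Suc n) P'. n \<notin> U}"
  unfolding ideals_def using restrict_mem_iff by (auto simp: less_Suc_eq subset_eq)

lemma insert_top_mem_ideals_iff:
  assumes "n \<notin> U"
  shows "insert n U \<in> ideals (Suc n) P' \<longleftrightarrow> U \<in> ideals n P \<and> strict_downset P' n \<subseteq> U"
proof
  assume V: "insert n U \<in> ideals (Suc n) P'"
  have "U \<subseteq> X n"
    using V assms unfolding ideals_def by (auto simp: less_Suc_eq)
  moreover have "x \<in> U" if "(x, y) \<in> P" "y \<in> U" for x y
  proof -
    have "(x, y) \<in> P'" "x < n"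
      using that restrict_mem_iff natural[of x y] by auto
    then show ?thesis
      using V that unfolding ideals_def by blast
  qed
  moreover have "strict_downset P' n \<subseteq> U"
    using V unfolding ideals_def strict_downset_def by blast
  ultimately show "U \<in> ideals n P \<and> strict_downset P' n \<subseteq> U"
    unfolding ideals_def by blast
next
  assume U: "U \<in> ideals n P \<and> strict_downset P' n \<subseteq> U"
  have "x \<in> insert n U" if "(x, y) \<in> P'" "y \<in> insert n U" for x y
  proof (cases "y = n")
    case True
    then show ?thesis using that U unfolding strict_downset_def by blast
  next
    case False
    with that U have "(x, y) \<in> P" "y \<in> U"
      using restrict_mem_iff unfolding ideals_def by auto
    then show ?thesis using U unfolding ideals_def by blast
  qed
  then show "insert n U \<in> ideals (Suc n) P'"
    using U unfolding ideals_def by auto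
qed

lemma ideals_Suc_eq_Grow: "ideals (Suc n) P' = Grow n (strict_downset P' n) (ideals n P)"
proof (intro set_eqI iffI)
  fix V assume V: "V \<in> ideals (Suc n) P'"
  show "V \<in> Grow n (strict_downset P' n) (ideals n P)"
  proof (cases "n \<in> V")
    case True
    then have "V = (V - {n}) \<union> {n}" by blast
    moreover have "V - {n} \<in> ideals n P" "strict_downset P' n \<subseteq> V - {n}"
      using insert_top_mem_ideals_iff[of "V - {n}"] V True by (simp_all add: insert_absorb)
    ultimately show ?thesis unfolding Grow_def by blast
  next
    case False
    then show ?thesis using V ideals_restrict_eq unfolding Grow_def by blast
  qed
next
  fix V assume "V \<in> Grow n (strict_downset P' n) (ideals n P)"
  then show "V \<in> ideals (Suc n) P'"
    unfolding Grow_def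
    using ideals_restrict_eq insert_top_mem_ideals_iff ideals_avoid_bound by auto
qed

lemma strict_downset_mem_ideals:
  assumes "trans P'"
  shows "strict_downset P' n \<in> ideals n P"
proof -
  have below: "x < n" if "x \<in> strict_downset P' n" for x
    using that natural unfolding strict_downset_def by fastforce
  have "x \<in> strict_downset P' n" if "(x, y) \<in> P" "y \<in> strict_downset P' n" for x y
  proof -
    have "(x, y) \<in> P'" "(y, n) \<in> P'" "x \<le> y"
      using that natural restrict_mem_iff unfolding strict_downset_def by auto
    with below[OF that(2)] assms show ?thesis
      unfolding strict_downset_def by (auto dest: transD)
  qed
  with below show ?thesis
    unfolding ideals_def by auto
qed

end

theorem theorem5p10:
  fixes n :: nat and P P' :: "nat rel"
  assumes "NL_poset n P"
    and "NL_poset (Suc n) P'"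
    and "restrict_rel P' (X n) = P"
  shows "\<exists>!S. S \<in> ideals n P \<and> Grow n S (ideals n P) = ideals (Suc n) P'"
proof
  have natural: "\<And>x y. (x, y) \<in> P' \<Longrightarrow> x \<le> y" and "trans P'"
    using assms(2) unfolding NL_poset_def by auto
  let ?S = "strict_downset P' n"
  have S_ideal: "?S \<in> ideals n P"
    using strict_downset_mem_ideals[OF natural assms(3) \<open>trans P'\<close>] .
  have Grow_S: "ideals (Suc n) P' = Grow n ?S (ideals n P)"
    using ideals_Suc_eq_Grow[OF natural assms(3)] .
  show "?S \<in> ideals n P \<and> Grow n ?S (ideals n P) = ideals (Suc n) P'"
    using S_ideal Grow_S by simp
  show "S = ?S" if "S \<in> ideals n P \<and> Grow n S (ideals n P) = ideals (Suc n) P'" for S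
    using Grow_inj[of "ideals n P" n S ?S] that ideals_avoid_bound S_ideal Grow_S by blast
qed

end
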